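(* Let $A=\{a_1,\ldots,a_k\}$ be a set of $k$ distinct positive integers with $a_1<a_2<\cdots<a_k$. If a tree $T$ has order at most $$\left(\sum_{i=1}^k a_i\right)+a_k-1+\left\lfloor\frac{k^2-3k+2}{6}\right\rfloor,$$ then $T$ is $A$-burnable.
   Context: For a vertex $u$ of a graph and an integer $m\ge 0$, $N_m[u]$ denotes the set of vertices at distance at most $m$ from $u$. For a set $A$ of positive integers $a_1,\ldots,a_k$, a graph $G$ is called $A$-burnable if there exist $k$ vertices $v_1,\ldots,v_k$ of $G$ (not necessarily distinct) such that $V(G)\subseteq\bigcup_{i=1}^k N_{a_i-1}[v_i]$. The order of a graph is its number of vertices. *)

theory Defs
  imports Main
begin

definition simple_graph :: "'a set \<Rightarrow> ('a \<Rightarrow> 'a \<Rightarrow> bool) \<Rightarrow> bool" where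
  "simple_graph V E \<longleftrightarrow> finite V \<and>
     (\<forall>u v. E u v \<longrightarrow> u \<in> V \<and> v \<in> V) \<and>
     (\<forall>u v. E u v \<longrightarrow> E v u) \<and> (\<forall>u. \<not> E u u)"

inductive walk :: "('a \<Rightarrow> 'a \<Rightarrow> bool) \<Rightarrow> 'a \<Rightarrow> 'a \<Rightarrow> nat \<Rightarrow> bool" for E where
  walk_refl: "walk E u u 0"
| walk_step: "E u w \<Longrightarrow> walk E w v n \<Longrightarrow> walk E u v (Suc n)"

definition connected_graph :: "'a set \<Rightarrow> ('a \<Rightarrow> 'a \<Rightarrow> bool) \<Rightarrow> bool" where
  "connected_graph V E \<longleftrightarrow> V \<noteq> {} \<and> (\<forall>u\<in>V. \<forall>v\<in>V. \<exists>n. walk E u v n)"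

definition is_cycle :: "('a \<Rightarrow> 'a \<Rightarrow> bool) \<Rightarrow> 'a list \<Rightarrow> bool" where
  "is_cycle E cs \<longleftrightarrow> length cs \<ge> 3 \<and> distinct cs \<and>
     (\<forall>i. Suc i < length cs \<longrightarrow> E (cs ! i) (cs ! Suc i)) \<and> E (last cs) (hd cs)"

definition is_tree :: "'a set \<Rightarrow> ('a \<Rightarrow> 'a \<Rightarrow> bool) \<Rightarrow> bool" where
  "is_tree V E \<longleftrightarrow> simple_graph V E \<and> connected_graph V E \<and> (\<nexists>cs. is_cycle E cs)"

definition closed_nbhd :: "'a set \<Rightarrow> ('a \<Rightarrow> 'a \<Rightarrow> bool) \<Rightarrow> nat \<Rightarrow> 'a \<Rightarrow> 'a set" where
  "closed_nbhd V E m u = {v \<in> V. \<exists>n \<le> m. walk E u v n}"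

definition burnable :: "nat set \<Rightarrow> 'a set \<Rightarrow> ('a \<Rightarrow> 'a \<Rightarrow> bool) \<Rightarrow> bool" where
  "burnable A V E \<longleftrightarrow> (\<exists>f. (\<forall>a\<in>A. f a \<in> V) \<and> V \<subseteq> (\<Union>a\<in>A. closed_nbhd V E (a - 1) (f a)))"

end

theory Submission
  imports Defs
begin

text \<open>Root the graph at \<rho>; the subtree of v consists of
  the vertices seen behind v from \<rho>, and deleting it keeps the graph connected. Let X be a
  geodesic from \<rho> to a farthest vertex. For 2 d \<le> a and a + d \<le> b, either a ball of radius a - 1
  centred on X swallows a subtree of at least a + d vertices, or a ball of radius b - 1 swallows
  one of at least b + d vertices. Spending the corresponding element of A on that ball and
  deleting the subtree, induction on k = |A| goes through as long as d covers the increase of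
  \<lfloor>(k^2 - 3k + 2)/6\<rfloor> from k - 1 to k; with b the second largest element of A a suitable a
  exists, since that increase is at most (k - 1)/3. For k = 1, a connected graph of order less
  than 2a has radius below a.\<close>

lemma walk_trans: "walk E u v m \<Longrightarrow> walk E v w n \<Longrightarrow> walk E u w (m + n)"
  by (induction rule: walk.induct) (auto intro: walk.intros)

lemma walk_snoc: "walk E u v n \<Longrightarrow> E v w \<Longrightarrow> walk E u w (Suc n)"
  using walk_trans[of E u v n w 1] by (simp add: walk.intros)

lemma walk_sym:
  assumes "\<And>a b. E a b \<Longrightarrow> E b a"
  shows "walk E u v n \<Longrightarrow> walk E v u n"
proof (induction rule: walk.induct)
  case (walk_refl u)
  show ?case by (rule walk.walk_refl)
next
  case (walk_step u w v n)
  then show ?case using walk_snoc[of E v w n u] assms by blast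
qed

lemma walk_mono: "walk E u v n \<Longrightarrow> (\<And>a b. E a b \<Longrightarrow> E' a b) \<Longrightarrow> walk E' u v n"
  by (induction rule: walk.induct) (auto intro: walk.intros)

lemma walk_zeroD: "walk E u v 0 \<Longrightarrow> u = v"
  by (erule walk.cases) auto

lemma walk_imp_path: "walk E u v n \<Longrightarrow> \<exists>g. g 0 = u \<and> g n = v \<and> (\<forall>i<n. E (g i) (g (Suc i)))"
proof (induction rule: walk.induct)
  case (walk_refl u)
  show ?case by (rule exI[of _ "\<lambda>_. u"]) simp
next
  case (walk_step u w v n)
  then obtain g where g: "g 0 = w" "g n = v" "\<forall>i<n. E (g i) (g (Suc i))"
    by blast
  let ?h = "\<lambda>i. case i of 0 \<Rightarrow> u | Suc j \<Rightarrow> g j"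
  have "\<forall>i<Suc n. E (?h i) (?h (Suc i))"
    using g walk_step(1) by (auto split: nat.split)
  then show ?case using g by (intro exI[of _ ?h]) auto
qed

lemma path_imp_walk:
  assumes "\<forall>i<n. E (g i) (g (Suc i))"
  shows "i \<le> j \<Longrightarrow> j \<le> n \<Longrightarrow> walk E (g i) (g j) (j - i)"
proof (induction j)
  case 0
  then show ?case by (simp add: walk.intros)
next
  case (Suc j)
  show ?case
  proof (cases "i = Suc j")
    case True
    then show ?thesis by (simp add: walk.intros)
  next
    case False
    then have "walk E (g i) (g j) (j - i)" using Suc by auto
    with assms Suc.prems False show ?thesis
      using walk_snoc[of E "g i" "g j" "j - i" "g (Suc j)"] by (simp add: Suc_diff_le)
  qed
qed

definition graph_dist :: "('a \<Rightarrow> 'a \<Rightarrow> bool) \<Rightarrow> 'a \<Rightarrow> 'a \<Rightarrow> nat" where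
  "graph_dist E u v = (LEAST n. walk E u v n)"

lemma walk_graph_dist: "walk E u v n \<Longrightarrow> walk E u v (graph_dist E u v)"
  unfolding graph_dist_def by (rule LeastI)

lemma graph_dist_le: "walk E u v n \<Longrightarrow> graph_dist E u v \<le> n"
  unfolding graph_dist_def by (rule Least_le)

abbreviation induced :: "('a \<Rightarrow> 'a \<Rightarrow> bool) \<Rightarrow> 'a set \<Rightarrow> 'a \<Rightarrow> 'a \<Rightarrow> bool" where
  "induced E S \<equiv> \<lambda>a b. E a b \<and> a \<in> S \<and> b \<in> S"

lemma closed_nbhd_induced_subset:
  assumes "S \<subseteq> V"
  shows "closed_nbhd S (induced E S) m u \<subseteq> closed_nbhd V E m u"
proof
  fix y assume "y \<in> closed_nbhd S (induced E S) m u"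
  then obtain n where y: "y \<in> S" "n \<le> m" and walk: "walk (induced E S) u y n"
    unfolding closed_nbhd_def by blast
  have "walk E u y n" by (rule walk_mono[OF walk]) simp
  then show "y \<in> closed_nbhd V E m u" using y assms unfolding closed_nbhd_def by blast
qed

lemma burnable_if_ball_covers:
  assumes "a \<in> A" "c \<in> V" "V \<subseteq> closed_nbhd V E (a - 1) c"
  shows "burnable A V E"
  unfolding burnable_def
proof (intro exI conjI)
  show "\<forall>a\<in>A. (\<lambda>_. c) a \<in> V" using assms(2) by simp
  show "V \<subseteq> (\<Union>a\<in>A. closed_nbhd V E (a - 1) ((\<lambda>_. c) a))" using assms(1,3) by auto
qed

lemma burnable_extend:
  assumes S: "S \<subseteq> closed_nbhd V E (j - 1) c" and c: "c \<in> V" and j: "j \<in> A"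
    and burn: "burnable (A - {j}) (V - S) (induced E (V - S))"
  shows "burnable A V E"
proof -
  obtain f where f: "\<forall>a\<in>A - {j}. f a \<in> V - S"
    and cover: "V - S \<subseteq> (\<Union>a\<in>A - {j}. closed_nbhd (V - S) (induced E (V - S)) (a - 1) (f a))"
    using burn unfolding burnable_def by blast
  define g where "g = f(j := c)"
  have "\<forall>a\<in>A. g a \<in> V" using f c unfolding g_def by auto
  moreover have "V \<subseteq> (\<Union>a\<in>A. closed_nbhd V E (a - 1) (g a))"
  proof
    fix y assume y: "y \<in> V"
    show "y \<in> (\<Union>a\<in>A. closed_nbhd V E (a - 1) (g a))"
    proof (cases "y \<in> S")
      case True
      then have "y \<in> closed_nbhd V E (j - 1) (g j)" using S unfolding g_def by auto
      then show ?thesis using j by blast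
    next
      case False
      then obtain a where a: "a \<in> A - {j}"
        and "y \<in> closed_nbhd (V - S) (induced E (V - S)) (a - 1) (f a)"
        using cover y by blast
      then have "y \<in> closed_nbhd V E (a - 1) (g a)"
        using closed_nbhd_induced_subset[of "V - S" V] unfolding g_def by auto
      then show ?thesis using a by blast
    qed
  qed
  ultimately show ?thesis unfolding burnable_def by blast
qed

locale connected_simple_graph =
  fixes V :: "'a set" and E :: "'a \<Rightarrow> 'a \<Rightarrow> bool"
  assumes simple: "simple_graph V E" and connected: "connected_graph V E"
begin

lemma finite_V: "finite V"
  using simple unfolding simple_graph_def by auto

lemma sym_E: "E a b \<Longrightarrow> E b a"
  using simple unfolding simple_graph_def by auto

lemma edge_in_V: "E a b \<Longrightarrow> a \<in> V \<and> b \<in> V"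
  using simple unfolding simple_graph_def by auto

lemma V_nonempty: "V \<noteq> {}"
  using connected unfolding connected_graph_def by auto

lemma walk_in_V: "walk E u v n \<Longrightarrow> u \<in> V \<Longrightarrow> v \<in> V"
  by (induction rule: walk.induct) (auto dest: edge_in_V)

abbreviation dist :: "'a \<Rightarrow> 'a \<Rightarrow> nat" where
  "dist \<equiv> graph_dist E"

lemma walk_dist: "u \<in> V \<Longrightarrow> v \<in> V \<Longrightarrow> walk E u v (dist u v)"
  using connected walk_graph_dist unfolding connected_graph_def by metis

lemma dist_triangle: "u \<in> V \<Longrightarrow> v \<in> V \<Longrightarrow> w \<in> V \<Longrightarrow> dist u w \<le> dist u v + dist v w"
  using graph_dist_le[OF walk_trans[OF walk_dist walk_dist]] by blast

lemma dist_commute: "u \<in> V \<Longrightarrow> v \<in> V \<Longrightarrow> dist u v = dist v u"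
  using graph_dist_le[OF walk_sym[OF sym_E walk_dist]] by (metis le_antisym)

lemma dist_self [simp]: "dist u u = 0"
  using graph_dist_le[OF walk.walk_refl[of E u]] by simp

lemma dist_eq_0D: "u \<in> V \<Longrightarrow> v \<in> V \<Longrightarrow> dist u v = 0 \<Longrightarrow> u = v"
  using walk_dist walk_zeroD by metis

lemma mem_closed_nbhdI: "y \<in> V \<Longrightarrow> c \<in> V \<Longrightarrow> dist c y \<le> m \<Longrightarrow> y \<in> closed_nbhd V E m c"
  unfolding closed_nbhd_def using walk_dist by blast

definition geodesic :: "'a \<Rightarrow> 'a \<Rightarrow> (nat \<Rightarrow> 'a) \<Rightarrow> bool" where
  "geodesic u w g \<longleftrightarrow> g 0 = u \<and> g (dist u w) = w \<and> (\<forall>i < dist u w. E (g i) (g (Suc i)))"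

lemma geodesic_exists: "u \<in> V \<Longrightarrow> w \<in> V \<Longrightarrow> \<exists>g. geodesic u w g"
  unfolding geodesic_def using walk_imp_path[OF walk_dist] by blast

context
  fixes u w g
  assumes geo: "geodesic u w g" and u: "u \<in> V"
begin

lemma geodesic_walk: "i \<le> j \<Longrightarrow> j \<le> dist u w \<Longrightarrow> walk E (g i) (g j) (j - i)"
  using path_imp_walk geo unfolding geodesic_def by blast

lemma geodesic_in_V: "i \<le> dist u w \<Longrightarrow> g i \<in> V"
  using geodesic_walk[of 0 i] geo u walk_in_V unfolding geodesic_def by auto

lemma geodesic_end_in_V: "w \<in> V"
  using geodesic_in_V[of "dist u w"] geo unfolding geodesic_def by simp

lemma geodesic_dist_le: "i \<le> j \<Longrightarrow> j \<le> dist u w \<Longrightarrow> dist (g i) (g j) \<le> j - i"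
  using graph_dist_le[OF geodesic_walk] by blast

lemma geodesic_dist_start: "i \<le> dist u w \<Longrightarrow> dist u (g i) = i"
  and geodesic_dist_end: "i \<le> dist u w \<Longrightarrow> dist (g i) w = dist u w - i"
proof -
  assume i: "i \<le> dist u w"
  have "dist u (g i) \<le> i" "dist (g i) w \<le> dist u w - i"
    using geodesic_dist_le[of 0 i] geodesic_dist_le[of i "dist u w"] i geo
    unfolding geodesic_def by auto
  moreover have "dist u w \<le> dist u (g i) + dist (g i) w"
    using dist_triangle[OF u geodesic_in_V[OF i] geodesic_end_in_V] .
  ultimately show "dist u (g i) = i" "dist (g i) w = dist u w - i"
    using i by linarith+
qed

lemma geodesic_inj: "inj_on g {0..dist u w}"
  by (rule inj_onI) (metis geodesic_dist_start atLeastAtMost_iff)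

lemma geodesic_card_image: "card (g ` {i..dist u w}) = dist u w + 1 - i"
  using card_image[OF inj_on_subset[OF geodesic_inj]] by auto

end

text \<open>In a tree rooted at \<rho> this is the subtree hanging from v.\<close>
definition subtree :: "'a \<Rightarrow> 'a \<Rightarrow> 'a set" where
  "subtree \<rho> v = {y \<in> V. dist \<rho> y = dist \<rho> v + dist v y}"

lemma subtree_subset: "subtree \<rho> v \<subseteq> V"
  unfolding subtree_def by auto

lemma finite_subtree: "finite (subtree \<rho> v)"
  using finite_subset[OF subtree_subset finite_V] .

lemma subtree_trans:
  assumes "\<rho> \<in> V" "u \<in> V" "v \<in> subtree \<rho> u" "z \<in> subtree \<rho> v"
  shows "z \<in> subtree \<rho> u"
proof -
  have v: "v \<in> V" and z: "z \<in> V" using assms subtree_subset by auto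
  have "dist u z \<le> dist u v + dist v z" using dist_triangle[OF assms(2) v z] .
  moreover have "dist \<rho> z \<le> dist \<rho> u + dist u z" using dist_triangle[OF assms(1,2) z] .
  ultimately show ?thesis using assms(3,4) z unfolding subtree_def by auto
qed

lemma root_notin_subtree: "\<rho> \<in> V \<Longrightarrow> v \<in> V \<Longrightarrow> v \<noteq> \<rho> \<Longrightarrow> \<rho> \<notin> subtree \<rho> v"
  unfolding subtree_def using dist_eq_0D by fastforce

lemma geodesic_subtree:
  assumes "geodesic \<rho> x X" "\<rho> \<in> V" "t \<le> s" "s \<le> dist \<rho> x"
  shows "X s \<in> subtree \<rho> (X t)"
proof -
  have "dist (X t) (X s) \<le> s - t" using geodesic_dist_le assms by blast
  moreover have "dist \<rho> (X s) \<le> dist \<rho> (X t) + dist (X t) (X s)"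
    using dist_triangle geodesic_in_V assms by (meson order_trans)
  ultimately show ?thesis
    using assms geodesic_dist_start[OF assms(1,2)] geodesic_in_V[OF assms(1,2)]
    unfolding subtree_def by auto
qed

lemma geodesic_image_subtree:
  "geodesic \<rho> x X \<Longrightarrow> \<rho> \<in> V \<Longrightarrow> s \<le> dist \<rho> x \<Longrightarrow> X ` {s..dist \<rho> x} \<subseteq> subtree \<rho> (X s)"
  using geodesic_subtree by auto

lemma geodesic_within_subtree:
  assumes y: "y \<in> subtree \<rho> v" and \<rho>: "\<rho> \<in> V" and v: "v \<in> V"
    and w: "geodesic v y w" and i: "i \<le> dist v y"
  shows "w i \<in> subtree \<rho> v" "dist \<rho> (w i) = dist \<rho> v + i"
proof -
  have wi: "w i \<in> V" and yV: "y \<in> V" using geodesic_in_V[OF w v i] y subtree_subset by auto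
  have "dist \<rho> (w i) \<le> dist \<rho> v + i"
    using dist_triangle[OF \<rho> v wi] geodesic_dist_start[OF w v i] by simp
  moreover have "dist \<rho> y \<le> dist \<rho> (w i) + (dist v y - i)"
    using dist_triangle[OF \<rho> wi yV] geodesic_dist_end[OF w v i] by simp
  ultimately show "dist \<rho> (w i) = dist \<rho> v + i"
    using y i unfolding subtree_def by auto
  then show "w i \<in> subtree \<rho> v"
    using wi geodesic_dist_start[OF w v i] unfolding subtree_def by simp
qed

text \<open>A geodesic from \<rho> to a vertex outside the subtree of v never enters it, because
  subtrees are closed under taking subtrees.\<close>
lemma connected_remove_subtree:
  assumes \<rho>: "\<rho> \<in> V" and v: "v \<in> V" "v \<noteq> \<rho>"
  shows "connected_simple_graph (V - subtree \<rho> v) (induced E (V - subtree \<rho> v))"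
proof -
  let ?V = "V - subtree \<rho> v"
  have walk_from_root: "walk (induced E ?V) \<rho> y (dist \<rho> y)" if y: "y \<in> ?V" for y
  proof -
    obtain g where g: "geodesic \<rho> y g" using geodesic_exists \<rho> y by blast
    have "g i \<in> ?V" if i: "i \<le> dist \<rho> y" for i
    proof
      show "g i \<in> V" using geodesic_in_V[OF g \<rho> i] .
      have "y \<in> subtree \<rho> (g i)"
        using geodesic_subtree[OF g \<rho> i order_refl] g unfolding geodesic_def by simp
      then show "g i \<notin> subtree \<rho> v"
        using subtree_trans[OF \<rho> v(1)] y by blast
    qed
    then have "\<forall>i<dist \<rho> y. induced E ?V (g i) (g (Suc i))"
      using g unfolding geodesic_def by auto
    from path_imp_walk[of "dist \<rho> y" "induced E ?V" g 0 "dist \<rho> y", OF this] show ?thesis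
      using g unfolding geodesic_def by simp
  qed
  have "simple_graph ?V (induced E ?V)"
    using simple finite_V unfolding simple_graph_def by auto
  moreover have "connected_graph ?V (induced E ?V)"
  proof -
    have sym: "\<And>a b. induced E ?V a b \<Longrightarrow> induced E ?V b a" using sym_E by blast
    have "walk (induced E ?V) a b (dist \<rho> a + dist \<rho> b)" if "a \<in> ?V" "b \<in> ?V" for a b
      using walk_trans[OF walk_sym[OF sym walk_from_root] walk_from_root] that by blast
    then show ?thesis
      unfolding connected_graph_def using root_notin_subtree[OF assms] \<rho> by blast
  qed
  ultimately show ?thesis by (simp add: connected_simple_graph_def)
qed

lemma subtree_in_ball:
  assumes "u \<in> V" and "\<And>y. y \<in> V \<Longrightarrow> dist \<rho> y \<le> dist \<rho> u + m"
  shows "subtree \<rho> u \<subseteq> closed_nbhd V E m u"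
  using assms mem_closed_nbhdI unfolding subtree_def by fastforce

definition ecc :: "'a \<Rightarrow> nat" where
  "ecc u = Max (dist u ` V)"

lemma dist_le_ecc: "y \<in> V \<Longrightarrow> dist u y \<le> ecc u"
  unfolding ecc_def using finite_V by simp

lemma ecc_attained: obtains y where "y \<in> V" "dist u y = ecc u"
proof -
  have "ecc u \<in> dist u ` V" unfolding ecc_def using finite_V V_nonempty by simp
  then show ?thesis by (metis imageE that)
qed

text \<open>Let \<rho> have minimal eccentricity e, let c be the neighbour of \<rho> towards a vertex at
  distance e, and z a vertex farthest from c. The geodesics from \<rho> to the two ends meet only
  in \<rho>: a common vertex would bring z within e - 1 of c.\<close>
lemma twice_ecc_le_card:
  assumes \<rho>: "\<rho> \<in> V" and min: "\<And>u. u \<in> V \<Longrightarrow> ecc \<rho> \<le> ecc u"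
  shows "2 * ecc \<rho> \<le> card V"
proof (cases "ecc \<rho> = 0")
  case False
  define e where "e = ecc \<rho>"
  obtain y where y: "y \<in> V" "dist \<rho> y = e" using ecc_attained e_def by metis
  obtain g where g: "geodesic \<rho> y g" using geodesic_exists \<rho> y by blast
  have e1: "1 \<le> e" using False e_def by simp
  define c where "c = g 1"
  have c: "c \<in> V" using geodesic_in_V[OF g \<rho>] e1 y unfolding c_def by simp
  have c\<rho>: "dist c \<rho> = 1"
    using geodesic_dist_start[OF g \<rho>, of 1] dist_commute[OF \<rho> c] e1 y unfolding c_def by simp
  obtain z where z: "z \<in> V" "dist c z = ecc c" using ecc_attained by metis
  have far: "e \<le> dist c z" using z min[OF c] e_def by simp
  define L where "L = dist \<rho> z"
  have Le: "L \<le> e" using dist_le_ecc[OF z(1)] e_def L_def by simp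
  have eL: "e \<le> L + 1" using dist_triangle[OF c \<rho> z(1)] far c\<rho> L_def by simp
  obtain u where u: "geodesic \<rho> z u" using geodesic_exists \<rho> z by blast
  have disj: "g ` {0..e} \<inter> u ` {1..L} = {}"
  proof (rule ccontr)
    assume "g ` {0..e} \<inter> u ` {1..L} \<noteq> {}"
    then obtain i j where i: "1 \<le> i" "i \<le> L" and j: "j \<le> e" and eq: "g j = u i" by auto
    have "j = i"
      using geodesic_dist_start[OF g \<rho>, of j] geodesic_dist_start[OF u \<rho>, of i] eq i j y L_def
      by simp
    have "dist c z \<le> dist c (g i) + dist (g i) z"
      using dist_triangle[OF c geodesic_in_V[OF g \<rho>] z(1)] i Le y by simp
    moreover have "dist c (g i) \<le> i - 1"
      using geodesic_dist_le[OF g \<rho>, of 1 i] i Le y unfolding c_def by simp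
    moreover have "dist (g i) z = L - i"
      using geodesic_dist_end[OF u \<rho>, of i] eq \<open>j = i\<close> i L_def by simp
    ultimately show False using far i Le by linarith
  qed
  have "card (g ` {0..e} \<union> u ` {1..L}) = (e + 1) + L"
    using card_Un_disjoint[OF _ _ disj] geodesic_inj[OF g \<rho>] geodesic_inj[OF u \<rho>] y L_def
    by (simp add: card_image inj_on_subset)
  moreover have "g ` {0..e} \<union> u ` {1..L} \<subseteq> V"
    using geodesic_in_V[OF g \<rho>] geodesic_in_V[OF u \<rho>] y L_def by auto
  ultimately have "e + 1 + L \<le> card V" using card_mono[OF finite_V] by metis
  then show ?thesis using eL e_def by linarith
qed simp

lemma ball_covers_small_graph:
  assumes "card V < 2 * a"
  shows "\<exists>c\<in>V. V \<subseteq> closed_nbhd V E (a - 1) c"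
proof -
  define \<rho> where "\<rho> = arg_min_on ecc V"
  have \<rho>: "\<rho> \<in> V" "\<And>u. u \<in> V \<Longrightarrow> ecc \<rho> \<le> ecc u"
    using arg_min_if_finite(1) arg_min_least[OF finite_V V_nonempty] finite_V V_nonempty
    unfolding \<rho>_def by auto
  have "ecc \<rho> \<le> a - 1" using twice_ecc_le_card[OF \<rho>] assms by linarith
  then have "V \<subseteq> closed_nbhd V E (a - 1) \<rho>"
    using dist_le_ecc mem_closed_nbhdI[OF _ \<rho>(1)] by (meson order_trans subsetI)
  then show ?thesis using \<rho> by blast
qed

text \<open>Follow a geodesic from X t to y as long as it runs along X; the branching point is X s,
  and the rest W of the geodesic avoids X.\<close>
lemma geodesic_branch:
  assumes \<rho>: "\<rho> \<in> V" and X: "geodesic \<rho> x X" and t: "t \<le> dist \<rho> x"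
    and y: "y \<in> subtree \<rho> (X t)"
  obtains s W where "t \<le> s" "s \<le> dist \<rho> x" "y \<in> subtree \<rho> (X s)"
    "W \<subseteq> subtree \<rho> (X t)" "W \<inter> X ` {0..dist \<rho> x} = {}" "card W = dist (X s) y"
proof -
  let ?n = "dist \<rho> x"
  have v: "X t \<in> V" and yV: "y \<in> V" using geodesic_in_V[OF X \<rho> t] y subtree_subset by auto
  have dv: "dist \<rho> (X t) = t" using geodesic_dist_start[OF X \<rho> t] .
  define e where "e = dist (X t) y"
  obtain w where w: "geodesic (X t) y w" using geodesic_exists v yV by blast
  have wd: "dist \<rho> (w i) = t + i" if "i \<le> e" for i
    using geodesic_within_subtree(2)[OF y \<rho> v w] that dv e_def by simp
  define P where "P = {i. i \<le> e \<and> t + i \<le> ?n \<and> w i = X (t + i)}"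
  have "0 \<in> P" using w t unfolding P_def geodesic_def by simp
  moreover have "finite P" unfolding P_def by simp
  ultimately have "Max P \<in> P" by (intro Max_in) auto
  have pmax: "\<And>i. i \<in> P \<Longrightarrow> i \<le> Max P" using \<open>finite P\<close> by simp
  define p where "p = Max P"
  from \<open>Max P \<in> P\<close> have pe: "p \<le> e" and pn: "t + p \<le> ?n" and wp: "w p = X (t + p)"
    unfolding P_def p_def by auto
  show ?thesis
  proof (rule that[of "t + p" "w ` {p<..e}"])
    have branch_dist: "dist (X (t + p)) y = e - p"
      using geodesic_dist_end[OF w v, of p] pe wp unfolding e_def by simp
    have "w e = y" using w unfolding geodesic_def e_def by simp
    then have "dist \<rho> y = t + e" using wd[of e] by simp
    then show "y \<in> subtree \<rho> (X (t + p))"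
      unfolding subtree_def using yV pe branch_dist geodesic_dist_start[OF X \<rho> pn] by simp
    have "inj_on w {p<..e}"
      by (rule inj_on_subset[OF geodesic_inj[OF w v]]) (auto simp: e_def)
    then show "card (w ` {p<..e}) = dist (X (t + p)) y"
      using branch_dist by (simp add: card_image)
    show "w ` {p<..e} \<subseteq> subtree \<rho> (X t)"
      using geodesic_within_subtree(1)[OF y \<rho> v w] e_def by auto
    show "w ` {p<..e} \<inter> X ` {0..?n} = {}"
    proof (rule ccontr)
      assume "w ` {p<..e} \<inter> X ` {0..?n} \<noteq> {}"
      then obtain i j where i: "p < i" "i \<le> e" and j: "j \<le> ?n" and eq: "w i = X j" by auto
      have "j = t + i" using wd[OF i(2)] geodesic_dist_start[OF X \<rho> j] eq by simp
      then have "i \<in> P" using i j eq unfolding P_def by simp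
      then show False using pmax i unfolding p_def by fastforce
    qed
  qed (use pn in auto)
qed

text \<open>If y hangs below X t but is far from X m, the geodesic to y branches off X before X m,
  and its part off X adds to every subtree of X s, s \<le> t.\<close>
lemma card_subtree_far_vertex:
  assumes \<rho>: "\<rho> \<in> V" and X: "geodesic \<rho> x X"
    and farthest: "\<And>z. z \<in> V \<Longrightarrow> dist \<rho> z \<le> dist \<rho> x"
    and st: "s \<le> t" and tm: "t \<le> m" and mh: "m \<le> dist \<rho> x"
    and y: "y \<in> subtree \<rho> (X t)" and y_far: "dist \<rho> x - m < dist (X m) y"
  shows "dist \<rho> x + 1 - s + dist (X m) y \<le> card (subtree \<rho> (X s)) + (m - t)"
proof -
  let ?h = "dist \<rho> x"
  have th: "t \<le> ?h" using tm mh by linarith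
  obtain b W where b: "t \<le> b" "b \<le> ?h" "y \<in> subtree \<rho> (X b)"
    and W: "W \<subseteq> subtree \<rho> (X t)" "W \<inter> X ` {0..?h} = {}" "card W = dist (X b) y"
    by (rule geodesic_branch[OF \<rho> X th y])
  have yV: "y \<in> V" using y subtree_subset by auto
  have XV: "\<And>i. i \<le> ?h \<Longrightarrow> X i \<in> V" using geodesic_in_V[OF X \<rho>] .
  have "b + card W \<le> ?h"
    using b(3) farthest[OF yV] geodesic_dist_start[OF X \<rho> b(2)] W(3) unfolding subtree_def by simp
  moreover have to_y: "dist (X m) y \<le> dist (X m) (X b) + card W"
    using dist_triangle[OF XV[OF mh] XV[OF b(2)] yV] W(3) by simp
  moreover have "m \<le> b \<Longrightarrow> dist (X m) (X b) \<le> b - m"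
    using geodesic_dist_le[OF X \<rho>] b(2) by simp
  ultimately have "b < m" using y_far by linarith
  then have "dist (X m) (X b) \<le> m - b"
    using geodesic_dist_le[OF X \<rho>, of b m] dist_commute[OF XV[OF mh] XV[OF b(2)]] mh by simp
  then have card_W: "dist (X m) y \<le> (m - t) + card W" using to_y b(1) by linarith
  have "X t \<in> subtree \<rho> (X s)" using geodesic_subtree[OF X \<rho> st th] .
  then have "W \<subseteq> subtree \<rho> (X s)" using W(1) subtree_trans[OF \<rho> XV] st th by fastforce
  then have sub: "X ` {s..?h} \<union> W \<subseteq> subtree \<rho> (X s)"
    using geodesic_image_subtree[OF X \<rho>] st th by simp
  have "X ` {s..?h} \<inter> W = {}" using W(2) by auto
  then have "card (X ` {s..?h} \<union> W) = ?h + 1 - s + card W"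
    using card_Un_disjoint[of "X ` {s..?h}" W] geodesic_card_image[OF X \<rho>]
      finite_subset[OF W(1) finite_subtree] by simp
  then show ?thesis using card_mono[OF finite_subtree sub] card_W by linarith
qed

text \<open>With X a geodesic to a farthest vertex at distance h, either the ball of radius a - 1
  around X (h + 1 - a) swallows the subtree of X (h + 1 - a - d), or some vertex of that subtree
  lies farther out and the subtree of X (h + 1 - b), of height b - 1, is heavy.\<close>
lemma heavy_subtree:
  assumes \<rho>: "\<rho> \<in> V" and a: "1 \<le> a" "2 * d \<le> a" and ab: "a + d \<le> b"
    and uncovered: "\<not> V \<subseteq> closed_nbhd V E (b - 1) \<rho>"
  obtains j c v where "j \<in> {a, b}" "c \<in> V" "v \<in> V" "v \<noteq> \<rho>"
    "subtree \<rho> v \<subseteq> closed_nbhd V E (j - 1) c" "j + d \<le> card (subtree \<rho> v)"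
proof -
  obtain x where x: "x \<in> V" "dist \<rho> x = ecc \<rho>" using ecc_attained by metis
  obtain X where X: "geodesic \<rho> x X" using geodesic_exists \<rho> x(1) by blast
  define h where "h = dist \<rho> x"
  have far: "\<And>y. y \<in> V \<Longrightarrow> dist \<rho> y \<le> h" using dist_le_ecc x(2) h_def by simp
  have bh: "b \<le> h"
  proof (rule ccontr)
    assume "\<not> b \<le> h"
    then have "V \<subseteq> closed_nbhd V E (b - 1) \<rho>"
      using far mem_closed_nbhdI[OF _ \<rho>] by fastforce
    with uncovered show False ..
  qed
  have XV: "\<And>i. i \<le> h \<Longrightarrow> X i \<in> V" using geodesic_in_V[OF X \<rho>] h_def by simp
  have not_root: "X i \<noteq> \<rho>" if "1 \<le> i" "i \<le> h" for i
    using geodesic_dist_start[OF X \<rho>, of i] that h_def by auto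
  define t m where "t = h + 1 - (a + d)" and "m = h + 1 - a"
  have t: "1 \<le> t" "t \<le> m" "m \<le> h" using ab bh a unfolding t_def m_def by auto
  show ?thesis
  proof (cases "\<forall>y\<in>subtree \<rho> (X t). dist (X m) y \<le> a - 1")
    case True
    have "a + d \<le> card (subtree \<rho> (X t))"
      using card_mono[OF finite_subtree geodesic_image_subtree[OF X \<rho>, of t]]
        geodesic_card_image[OF X \<rho>, of t] t ab bh unfolding t_def h_def by simp
    moreover have "subtree \<rho> (X t) \<subseteq> closed_nbhd V E (a - 1) (X m)"
      using True mem_closed_nbhdI[OF _ XV] subtree_subset t by blast
    ultimately show ?thesis
      using that[of a "X m" "X t"] XV not_root t by simp
  next
    case False
    then obtain y where y: "y \<in> subtree \<rho> (X t)" and y_far: "a - 1 < dist (X m) y"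
      by (auto simp: not_le)
    define u where "u = X (h + 1 - b)"
    have "b + dist (X m) y \<le> card (subtree \<rho> u) + d"
      using card_subtree_far_vertex[OF \<rho> X, of "h + 1 - b" t m y] far y y_far t ab bh a
      unfolding u_def t_def m_def h_def by simp
    then have "b + d \<le> card (subtree \<rho> u)" using y_far a by linarith
    moreover have "subtree \<rho> u \<subseteq> closed_nbhd V E (b - 1) u"
      using subtree_in_ball[OF XV] far geodesic_dist_start[OF X \<rho>] bh ab a
      unfolding u_def h_def by simp
    ultimately show ?thesis
      using that[of b u u] XV not_root bh ab a unfolding u_def by simp
  qed
qed

end

definition order_bonus :: "nat \<Rightarrow> nat" where
  "order_bonus k = (k - 1) * (k - 2) div 6"

lemma int_order_bonus: "int (order_bonus k) = (int k ^ 2 - 3 * int k + 2) div 6"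
proof (cases "k \<le> 1")
  case True
  then show ?thesis unfolding order_bonus_def by (auto simp: le_Suc_eq)
next
  case False
  then have "int ((k - 1) * (k - 2)) = (int k - 1) * (int k - 2)"
    by (simp add: of_nat_diff)
  also have "\<dots> = int k ^ 2 - 3 * int k + 2"
    by (simp add: power2_eq_square algebra_simps)
  finally have "int ((k - 1) * (k - 2)) = int k ^ 2 - 3 * int k + 2" .
  then show ?thesis unfolding order_bonus_def by (simp only: zdiv_int of_nat_numeral)
qed

lemma consecutive_prod_mod_6: "(n::nat) * (n + 1) mod 6 \<in> {0, 2}"
proof -
  have small: "s * (s + 1) mod 6 \<in> {0, 2}" if "s < 6" for s :: nat
  proof -
    have "s = 0 \<or> s = 1 \<or> s = 2 \<or> s = 3 \<or> s = 4 \<or> s = 5" using that by arith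
    then show ?thesis by auto
  qed
  have "n * (n + 1) mod 6 = (n mod 6) * ((n + 1) mod 6) mod 6"
    by (rule mod_mult_eq[symmetric])
  also have "(n + 1) mod 6 = (n mod 6 + 1) mod 6"
    by (rule mod_add_left_eq[symmetric])
  also have "n mod 6 * ((n mod 6 + 1) mod 6) mod 6 = n mod 6 * (n mod 6 + 1) mod 6"
    by (rule mod_mult_right_eq)
  finally show ?thesis using small[of "n mod 6"] by simp
qed

lemma order_bonus_numerator_mod_6: "(k - 1) * (k - 2) mod 6 \<le> (2::nat)"
proof (cases "k < 2")
  case True
  then have "k - 2 = 0" by simp
  then show ?thesis by simp
next
  case False
  have le2: "m \<in> {0, 2} \<Longrightarrow> m \<le> 2" for m :: nat by auto
  from False have "k - 1 = k - 2 + 1" by simp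
  then have "(k - 1) * (k - 2) = (k - 2) * (k - 2 + 1)"
    by (subst \<open>k - 1 = k - 2 + 1\<close>) (rule mult.commute)
  then show ?thesis using le2[OF consecutive_prod_mod_6[of "k - 2"]] by (simp only:)
qed

lemma order_bonus_Suc:
  "order_bonus k \<le> order_bonus (Suc k)" "3 * (order_bonus (Suc k) - order_bonus k) \<le> k"
proof -
  define P Q where "P = k * (k - 1)" and "Q = (k - 1) * (k - 2)"
  have bonus: "order_bonus (Suc k) = P div 6" "order_bonus k = Q div 6"
    unfolding order_bonus_def P_def Q_def by simp_all
  have PQ: "P = Q + 2 * (k - 1)" unfolding P_def Q_def by (cases k; cases "k - 1") auto
  then show "order_bonus k \<le> order_bonus (Suc k)"
    unfolding bonus by (intro div_le_mono) simp
  show "3 * (order_bonus (Suc k) - order_bonus k) \<le> k"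
  proof (cases "k = 0")
    case False
    have key: "\<And>p q pm qm. 6 * p + pm = Q + 2 * (k - 1) \<Longrightarrow> 6 * q + qm = Q \<Longrightarrow> qm \<le> 2
        \<Longrightarrow> 3 * (p - q) \<le> k"
      using False by linarith
    have "6 * (P div 6) + P mod 6 = Q + 2 * (k - 1)"
      unfolding PQ[symmetric] by (rule mult_div_mod_eq)
    moreover have "6 * (Q div 6) + Q mod 6 = Q" by (rule mult_div_mod_eq)
    moreover have "Q mod 6 \<le> 2" using order_bonus_numerator_mod_6 unfolding Q_def .
    ultimately show ?thesis unfolding bonus by (rule key)
  qed (simp add: order_bonus_def)
qed

text \<open>Among the elements of B at least |B| - d are \<le> Max B - d, and positivity bounds the
  largest of them from below by their number.\<close>
lemma spaced_element:
  fixes B :: "nat set"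
  assumes B: "finite B" "B \<noteq> {}" "0 \<notin> B" and d: "3 * d \<le> card B"
  obtains a where "a \<in> B" "a + d \<le> Max B" "2 * d \<le> a"
proof -
  define C where "C = {x \<in> B. x + d \<le> Max B}"
  have C_sub: "C \<subseteq> B" and C_le: "\<And>x. x \<in> C \<Longrightarrow> x + d \<le> Max B"
    unfolding C_def by auto
  have fin_C: "finite C" using finite_subset[OF C_sub B(1)] .
  have "B - C \<subseteq> {Max B - d<..Max B}"
  proof
    fix x assume x: "x \<in> B - C"
    have "x \<le> Max B" using x B(1) by simp
    moreover have "x \<noteq> 0" using x B(3) by (metis DiffD1)
    moreover have "Max B < x + d" using x unfolding C_def by auto
    ultimately show "x \<in> {Max B - d<..Max B}" by auto
  qed
  then have "card (B - C) \<le> card {Max B - d<..Max B}" by (intro card_mono) simp_all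
  then have "card (B - C) \<le> d" by simp
  moreover have "card (B - C) = card B - card C" using card_Diff_subset[OF fin_C C_sub] .
  moreover have "card C \<le> card B" using card_mono[OF B(1) C_sub] .
  moreover have "card B \<noteq> 0" using B(1,2) by simp
  ultimately have card_C: "card B - d \<le> card C" "card C \<noteq> 0" using d by linarith+
  then have C_ne: "C \<noteq> {}" by auto
  have "C \<subseteq> {1..Max C}"
  proof
    fix x assume x: "x \<in> C"
    then have "x \<noteq> 0" using B(3) C_sub by (metis subsetD)
    then show "x \<in> {1..Max C}" using Max_ge[OF fin_C x] by simp
  qed
  then have "card C \<le> Max C" using card_mono[of "{1..Max C}" C] by simp
  then have "2 * d \<le> Max C" using card_C d by linarith
  moreover have "Max C \<in> C" using Max_in[OF fin_C C_ne] .
  ultimately show ?thesis using C_sub C_le by (intro that[of "Max C"]) auto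
qed

lemma order_bound_remove:
  fixes A :: "nat set"
  assumes A: "finite A" "j \<in> A" "j \<noteq> Max A" and S: "finite V" "S \<subseteq> V"
    and order: "card V + 1 \<le> \<Sum>A + Max A + order_bonus (card A)"
    and heavy: "j + (order_bonus (card A) - order_bonus (card A - 1)) \<le> card S"
  shows "card (V - S) + 1 \<le> \<Sum>(A - {j}) + Max (A - {j}) + order_bonus (card (A - {j}))"
proof -
  have Max_eq: "Max (A - {j}) = Max A"
  proof (rule Max_eqI)
    show "finite (A - {j})" using A(1) by simp
    show "Max A \<in> A - {j}" using Max_in[OF A(1)] A(2,3) by blast
    show "y \<le> Max A" if "y \<in> A - {j}" for y using that A(1) by simp
  qed
  have sum_eq: "\<Sum>(A - {j}) = \<Sum>A - j" using sum_diff1_nat[of "\<lambda>x. x" A j] A(2) by simp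
  have "j \<le> \<Sum>A" using member_le_sum[of j A "\<lambda>x. x"] A(1,2) by simp
  have card_V_eq: "card (V - S) = card V - card S"
    by (rule card_Diff_subset[OF finite_subset[OF S(2,1)] S(2)])
  have "card S \<le> card V" by (rule card_mono[OF S(1,2)])
  have card_A: "card A - 1 = card (A - {j})" "card A = Suc (card (A - {j}))"
    using card_Suc_Diff1[OF A(1,2)] by simp_all
  have "order_bonus (card (A - {j})) \<le> order_bonus (card A)"
    using order_bonus_Suc(1)[of "card (A - {j})"] card_A(2) by simp
  then show ?thesis
    using order heavy \<open>j \<le> \<Sum>A\<close> \<open>card S \<le> card V\<close> unfolding Max_eq sum_eq card_V_eq card_A(1)
    by linarith
qed

lemma (in connected_simple_graph) covering_step:
  assumes A: "finite A" "0 \<notin> A" "2 \<le> card A"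
  obtains (ball) a c where "a \<in> A" "c \<in> V" "V \<subseteq> closed_nbhd V E (a - 1) c"
  | (subtree) j \<rho> c v where "j \<in> A" "j \<noteq> Max A" "\<rho> \<in> V" "c \<in> V" "v \<in> V" "v \<noteq> \<rho>"
      "subtree \<rho> v \<subseteq> closed_nbhd V E (j - 1) c"
      "j + (order_bonus (card A) - order_bonus (card A - 1)) \<le> card (subtree \<rho> v)"
proof -
  define A' where "A' = A - {Max A}"
  define d where "d = order_bonus (card A) - order_bonus (card A - 1)"
  have "A \<noteq> {}" using A(3) by auto
  then have card_A': "card A' = card A - 1" using Max_in[OF A(1)] A(1) unfolding A'_def by simp
  then have "A' \<noteq> {}" using A(3) by auto
  then have A': "finite A'" "A' \<noteq> {}" "0 \<notin> A'" using A(1,2) unfolding A'_def by auto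
  have "3 * d \<le> card A'"
    using order_bonus_Suc(2)[of "card A'"] card_A' A(3) unfolding d_def by (simp add: Suc_diff_Suc)
  then obtain a where a: "a \<in> A'" "a + d \<le> Max A'" "2 * d \<le> a"
    using spaced_element A' by blast
  have "a \<noteq> 0" using a(1) A'(3) by metis
  then have "1 \<le> a" by simp
  have Max_A': "Max A' \<in> A'" using Max_in A' by blast
  then have "Max A' \<in> A" unfolding A'_def by blast
  obtain \<rho> where \<rho>: "\<rho> \<in> V" using V_nonempty by blast
  show ?thesis
  proof (cases "V \<subseteq> closed_nbhd V E (Max A' - 1) \<rho>")
    case True
    then show ?thesis using ball \<open>Max A' \<in> A\<close> \<rho> by blast
  next
    case False
    obtain j c v where "j \<in> {a, Max A'}" "c \<in> V" "v \<in> V" "v \<noteq> \<rho>"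
      "subtree \<rho> v \<subseteq> closed_nbhd V E (j - 1) c" "j + d \<le> card (subtree \<rho> v)"
      by (rule heavy_subtree[OF \<rho> \<open>1 \<le> a\<close> a(3,2) False])
    moreover have "j \<in> A" "j \<noteq> Max A" if "j \<in> {a, Max A'}" for j
      using that a(1) Max_A' unfolding A'_def by auto
    ultimately show ?thesis using subtree \<rho> unfolding d_def by blast
  qed
qed

lemma burnable_if_card_le:
  assumes "finite A" "A \<noteq> {}" "0 \<notin> A" "connected_simple_graph V E"
    and "card V + 1 \<le> \<Sum>A + Max A + order_bonus (card A)"
  shows "burnable A V E"
  using assms
proof (induction "card A" arbitrary: A V E rule: less_induct)
  case less
  interpret G: connected_simple_graph V E by fact
  have "card A \<noteq> 0" using less.prems(1,2) by simp
  then consider (single) "card A = 1" | (several) "2 \<le> card A" by linarith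
  then show ?case
  proof cases
    case single
    then obtain a where a: "A = {a}" by (rule card_1_singletonE)
    then have "card V < 2 * a" using less.prems(5) by (simp add: order_bonus_def)
    then obtain c where "c \<in> V" "V \<subseteq> closed_nbhd V E (a - 1) c"
      using G.ball_covers_small_graph by blast
    moreover have "a \<in> A" using a by simp
    ultimately show ?thesis by (intro burnable_if_ball_covers)
  next
    case several
    from less.prems(1,3) several show ?thesis
    proof (cases rule: G.covering_step)
      case (ball a c)
      then show ?thesis by (intro burnable_if_ball_covers)
    next
      case (subtree j \<rho> c v)
      let ?S = "G.subtree \<rho> v"
      have "burnable (A - {j}) (V - ?S) (induced E (V - ?S))"
      proof (rule less.hyps)
        show "card (A - {j}) < card A" using card_Diff1_less[OF less.prems(1) subtree(1)] .
        show "finite (A - {j})" "0 \<notin> A - {j}" using less.prems(1,3) by simp_all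
        show "A - {j} \<noteq> {}" using Max_in[OF less.prems(1,2)] subtree(2) by blast
        show "connected_simple_graph (V - ?S) (induced E (V - ?S))"
          using G.connected_remove_subtree subtree(3,5,6) by blast
        show "card (V - ?S) + 1 \<le> \<Sum>(A - {j}) + Max (A - {j}) + order_bonus (card (A - {j}))"
          by (rule order_bound_remove[OF less.prems(1) subtree(1,2) G.finite_V G.subtree_subset
                less.prems(5) subtree(8)])
      qed
      then show ?thesis by (rule burnable_extend[OF subtree(7,4,1)])
    qed
  qed
qed

theorem theorem3:
  fixes A :: "nat set" and V :: "'a set" and E :: "'a \<Rightarrow> 'a \<Rightarrow> bool"
  assumes "finite A" and "A \<noteq> {}" and "0 \<notin> A"
    and "is_tree V E"
    and "int (card V) \<le> int (\<Sum>A) + int (Max A) - 1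
           + (int (card A) ^ 2 - 3 * int (card A) + 2) div 6"
  shows "burnable A V E"
proof (rule burnable_if_card_le[OF assms(1-3)])
  show "connected_simple_graph V E"
    using assms(4) unfolding is_tree_def connected_simple_graph_def by simp
  have "int (card V) + 1 \<le> int (\<Sum>A) + int (Max A) + int (order_bonus (card A))"
    using assms(5) unfolding int_order_bonus by linarith
  then show "card V + 1 \<le> \<Sum>A + Max A + order_bonus (card A)" by linarith
qed

end
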